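(* Let $T$, $E$ (a $\mu$-spanning $\mathbb{T}$-eigenvector field), $R$, $(e_k)$, $\sigma_k$ be as in the context. For every positive integer $n$ the series $\sum_{k\ge1}\sigma_k^2\|T^ne_k\|^2$ converges and $$\sum_{k=1}^{\infty}\sigma_k^2\|T^ne_k\|^2\le\frac{\|E\|_2^2}{2}.$$
   Context: $\mathcal{H}$ complex separable infinite-dimensional Hilbert space (inner product linear in second variable), $T$ bounded, $\mathbb{T}$ unit circle, $\mu$ normalized Lebesgue measure. $E:\mathbb{T}\to\mathcal{H}$ bounded with $TE(\lambda)=\lambda E(\lambda)$, $\mu$-spanning ($\{E(\lambda):\lambda\in A\}$ spans a dense subspace whenever $\mu(A)=1$); $\|E\|_2^2=\int\|E(\lambda)\|^2d\mu$. $R$ is the positive trace-class operator with $\langle Rx,y\rangle=\int\langle x,E(\lambda)\rangle\overline{\langle y,E(\lambda)\rangle}d\mu(\lambda)$; $(e_k)_{k\ge1}$ is an orthonormal basis of eigenvectors of $R$, $Re_k=2\sigma_k^2e_k$. *)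

theory Defs
  imports "HOL-Analysis.Analysis" "HOL-Probability.Probability"
begin

text \<open>Complex inner product spaces (HOL-Analysis only provides real ones).
  The inner product is conjugate-linear in the first and linear in the second variable.\<close>
class complex_inner_space = real_normed_vector +
  fixes scaleC :: "complex \<Rightarrow> 'a \<Rightarrow> 'a"
    and cinner :: "'a \<Rightarrow> 'a \<Rightarrow> complex"
  assumes scaleC_of_real: "scaleC (complex_of_real r) x = scaleR r x"
    and scaleC_add_left: "scaleC (a + b) x = scaleC a x + scaleC b x"
    and scaleC_add_right: "scaleC a (x + y) = scaleC a x + scaleC a y"
    and scaleC_scaleC: "scaleC a (scaleC b x) = scaleC (a * b) x"
    and cinner_commute: "cinner x y = cnj (cinner y x)"
    and cinner_add_left: "cinner (x + y) z = cinner x z + cinner y z"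
    and cinner_scaleC_left: "cinner (scaleC c x) y = cnj c * cinner x y"
    and cinner_norm: "cinner x x = complex_of_real ((norm x)\<^sup>2)"

definition cspan :: "'a::complex_inner_space set \<Rightarrow> 'a set" where
  "cspan S = {x. \<exists>F c. finite F \<and> F \<subseteq> S \<and> x = (\<Sum>v\<in>F. scaleC (c v) v)}"

definition bounded_clinear_op :: "('a::complex_inner_space \<Rightarrow> 'a) \<Rightarrow> bool" where
  "bounded_clinear_op T \<longleftrightarrow> (\<forall>x y. T (x + y) = T x + T y) \<and>
     (\<forall>c x. T (scaleC c x) = scaleC c (T x)) \<and> (\<exists>K. \<forall>x. norm (T x) \<le> norm x * K)"

definition circle_measure :: "complex measure" where
  "circle_measure = distr (uniform_measure lborel {0..2*pi}) borel cis"

end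

theory Submission
  imports Defs
begin

text \<open>Expand \<open>E z\<close> in the eigenbasis \<open>e\<close> of \<open>R\<close>, writing \<open>c\<^sub>k z = \<langle>e\<^sub>k, E z\<rangle>\<close>.
  By the definition of \<open>R\<close>, the coefficient functions are orthogonal in \<open>L\<^sup>2\<close>:
  \<open>\<integral> cnj (c\<^sub>k) c\<^sub>l = \<langle>R e\<^sub>l, e\<^sub>k\<rangle> = 2\<sigma>\<^sub>k\<^sup>2 \<delta>\<^sub>k\<^sub>l\<close>. Hence integrating
  \<open>\<parallel>T\<^sup>n (\<Sum>\<^sub>k\<^sub><\<^sub>N c\<^sub>k(z) e\<^sub>k)\<parallel>\<^sup>2\<close> over the circle gives exactly \<open>\<Sum>\<^sub>k\<^sub><\<^sub>N 2\<sigma>\<^sub>k\<^sup>2\<parallel>T\<^sup>n e\<^sub>k\<parallel>\<^sup>2\<close>.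
  As \<open>N \<rightarrow> \<infinity>\<close> the partial expansions converge to \<open>E z\<close>, so by dominated convergence
  these sums converge to \<open>\<integral> \<parallel>T\<^sup>n E z\<parallel>\<^sup>2\<close>, which equals \<open>\<integral> \<parallel>E z\<parallel>\<^sup>2\<close> because \<open>E z\<close> is an
  eigenvector for the unimodular eigenvalue \<open>z\<close>. So the inequality in fact holds with equality.\<close>

section \<open>Complex inner product spaces\<close>

context complex_inner_space
begin

lemma cinner_zero_left [simp]: "cinner 0 y = 0"
  using cinner_add_left [of 0 0 y] by simp

lemma cinner_zero_right [simp]: "cinner x 0 = 0"
  by (metis cinner_commute cinner_zero_left complex_cnj_zero)

lemma cinner_add_right: "cinner x (y + z) = cinner x y + cinner x z"
  by (metis cinner_commute cinner_add_left complex_cnj_add)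

lemma cinner_scaleC_right: "cinner x (scaleC c y) = c * cinner x y"
  by (metis cinner_commute cinner_scaleC_left complex_cnj_cnj complex_cnj_mult)

lemma cinner_diff_left: "cinner (x - z) y = cinner x y - cinner z y"
  using cinner_add_left [of "x - z" z y] by (simp add: algebra_simps)

lemma cinner_diff_right: "cinner x (y - z) = cinner x y - cinner x z"
  by (metis cinner_commute cinner_diff_left complex_cnj_diff)

lemma cinner_sum_left: "cinner (\<Sum>i\<in>A. f i) y = (\<Sum>i\<in>A. cinner (f i) y)"
  by (induction A rule: infinite_finite_induct) (auto simp: cinner_add_left)

lemma cinner_sum_right: "cinner x (\<Sum>i\<in>A. f i) = (\<Sum>i\<in>A. cinner x (f i))"
  by (induction A rule: infinite_finite_induct) (auto simp: cinner_add_right)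

lemma cnj_cinner [simp]: "cnj (cinner x y) = cinner y x"
  by (metis cinner_commute complex_cnj_cnj)

lemma cinner_commute_eq_zero: "cinner x y = 0 \<longleftrightarrow> cinner y x = 0"
  by (metis cinner_commute complex_cnj_zero_iff)

lemma scaleC_zero_right [simp]: "scaleC c 0 = 0"
  using scaleC_add_right [of c 0 0] by simp

lemma scaleC_sum_right: "scaleC c (\<Sum>i\<in>A. f i) = (\<Sum>i\<in>A. scaleC c (f i))"
  by (induction A rule: infinite_finite_induct) (auto simp: scaleC_add_right)

lemma power2_norm_eq_iff_cinner:
  "(norm x)\<^sup>2 = r \<longleftrightarrow> cinner x x = complex_of_real r"
  by (simp only: cinner_norm of_real_eq_iff)

lemma norm_scaleC: "norm (scaleC a x) = norm a * norm x"
proof -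
  have a: "cnj a * a = complex_of_real ((norm a)\<^sup>2)"
    by (metis complex_norm_square mult.commute)
  have "cinner (scaleC a x) (scaleC a x) = cnj a * a * cinner x x"
    by (simp add: cinner_scaleC_left cinner_scaleC_right)
  also have "\<dots> = complex_of_real ((norm a)\<^sup>2) * complex_of_real ((norm x)\<^sup>2)"
    by (simp only: a cinner_norm)
  also have "\<dots> = complex_of_real ((norm a * norm x)\<^sup>2)"
    by (simp only: of_real_mult power_mult_distrib)
  finally have "(norm (scaleC a x))\<^sup>2 = (norm a * norm x)\<^sup>2"
    by (simp only: power2_norm_eq_iff_cinner)
  then show ?thesis
    by (simp add: power2_eq_iff_nonneg)
qed

lemma power2_norm_add_orthogonal:
  assumes "cinner x y = 0"
  shows "(norm (x + y))\<^sup>2 = (norm x)\<^sup>2 + (norm y)\<^sup>2"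
proof -
  have "cinner (x + y) (x + y) = cinner x x + cinner y y"
    using assms cinner_commute_eq_zero [of x y] by (simp add: cinner_add_left cinner_add_right)
  then show ?thesis
    by (simp only: power2_norm_eq_iff_cinner cinner_norm of_real_add)
qed

text \<open>Cauchy--Schwarz, by expanding \<open>\<parallel>y - c x\<parallel>\<^sup>2 \<ge> 0\<close> for the projection coefficient
  \<open>c = \<langle>x, y\<rangle> / \<parallel>x\<parallel>\<^sup>2\<close>.\<close>
lemma norm_cinner_le: "norm (cinner x y) \<le> norm x * norm y"
proof (cases "x = 0")
  case False
  define c where "c = cinner x y / complex_of_real ((norm x)\<^sup>2)"
  have x: "norm x > 0"
    using False by simp
  have "cinner (y - scaleC c x) (y - scaleC c x)
      = cinner y y - c * cinner y x - cnj c * cinner x y + cnj c * c * cinner x x"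
    by (simp add: cinner_diff_left cinner_diff_right cinner_scaleC_left cinner_scaleC_right
        algebra_simps)
  also have "\<dots> = cinner y y - cinner x y * cinner y x / complex_of_real ((norm x)\<^sup>2)"
    using x by (simp add: c_def cinner_norm field_simps power2_eq_square)
  also have "\<dots> = complex_of_real ((norm y)\<^sup>2 - (norm (cinner x y))\<^sup>2 / (norm x)\<^sup>2)"
    using complex_norm_square [of "cinner x y"] by (simp add: cinner_norm)
  finally have "(norm (y - scaleC c x))\<^sup>2 = (norm y)\<^sup>2 - (norm (cinner x y))\<^sup>2 / (norm x)\<^sup>2"
    by (simp add: power2_norm_eq_iff_cinner)
  then have "(norm (cinner x y))\<^sup>2 / (norm x)\<^sup>2 \<le> (norm y)\<^sup>2"
    by (metis diff_ge_0_iff_ge zero_le_power2)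
  then have "(norm (cinner x y))\<^sup>2 \<le> (norm x * norm y)\<^sup>2"
    using x by (simp add: field_simps power_mult_distrib)
  then show ?thesis
    by (meson norm_ge_zero power2_le_imp_le mult_nonneg_nonneg)
qed simp

end

lemma continuous_on_cinner_right:
  fixes x :: "'a::complex_inner_space"
  shows "continuous_on UNIV (cinner x)"
proof -
  have "dist (cinner x y) (cinner x z) \<le> norm x * dist y z" for y z
    using norm_cinner_le [of x "y - z"] by (simp add: dist_norm cinner_diff_right)
  then show ?thesis
    by (intro lipschitz_on_continuous_on [of "norm x"]) (auto intro!: lipschitz_onI)
qed

lemma norm_sum_scaleC_sq:
  fixes w :: "'i \<Rightarrow> 'a::complex_inner_space"
  shows "complex_of_real ((norm (\<Sum>k\<in>A. scaleC (c k) (w k)))\<^sup>2)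
     = (\<Sum>k\<in>A. \<Sum>l\<in>A. cnj (c k) * c l * cinner (w k) (w l))"
  by (simp add: cinner_norm [symmetric] cinner_sum_left cinner_sum_right cinner_scaleC_left
      cinner_scaleC_right sum_distrib_left mult.assoc del: of_real_power)
     (subst sum.swap, simp add: mult.left_commute)

section \<open>Bounded complex-linear operators\<close>

lemma bounded_clinear_op_add: "bounded_clinear_op S \<Longrightarrow> S (x + y) = S x + S y"
  unfolding bounded_clinear_op_def by blast

lemma bounded_clinear_op_scaleC: "bounded_clinear_op S \<Longrightarrow> S (scaleC c x) = scaleC c (S x)"
  unfolding bounded_clinear_op_def by blast

lemma bounded_clinear_op_zero: "bounded_clinear_op S \<Longrightarrow> S 0 = 0"
  using bounded_clinear_op_add [of S 0 0] by simp

lemma bounded_clinear_op_diff: "bounded_clinear_op S \<Longrightarrow> S (x - y) = S x - S y"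
  using bounded_clinear_op_add [of S "x - y" y] by (simp add: eq_diff_eq)

lemma bounded_clinear_op_sum:
  "bounded_clinear_op S \<Longrightarrow> S (\<Sum>i\<in>A. f i) = (\<Sum>i\<in>A. S (f i))"
  by (induction A rule: infinite_finite_induct)
     (auto simp: bounded_clinear_op_add bounded_clinear_op_zero)

lemma bounded_clinear_op_nonneg_bound:
  assumes "bounded_clinear_op S"
  obtains K where "K \<ge> 0" "\<And>x. norm (S x) \<le> norm x * K"
proof -
  obtain K where "\<forall>x. norm (S x) \<le> norm x * K"
    using assms unfolding bounded_clinear_op_def by blast
  then have "norm (S x) \<le> norm x * max K 0" for x
    by (smt (verit) mult_left_mono norm_ge_zero)
  then show thesis
    using that [of "max K 0"] by simp
qed

lemma bounded_clinear_op_comp: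
  assumes S: "bounded_clinear_op S" and U: "bounded_clinear_op U"
  shows "bounded_clinear_op (S \<circ> U)"
proof -
  obtain K where K: "K \<ge> 0" "\<And>x. norm (S x) \<le> norm x * K"
    using bounded_clinear_op_nonneg_bound [OF S] by blast
  obtain L where L: "\<And>x. norm (U x) \<le> norm x * L"
    using bounded_clinear_op_nonneg_bound [OF U] by blast
  have "norm (S (U x)) \<le> norm x * (L * K)" for x
  proof -
    have "norm (S (U x)) \<le> norm (U x) * K"
      by (rule K(2))
    also have "\<dots> \<le> norm x * L * K"
      by (rule mult_right_mono [OF L K(1)])
    finally show ?thesis
      by (simp add: mult.assoc)
  qed
  then show ?thesis
    using S U unfolding bounded_clinear_op_def by auto
qed

lemma bounded_clinear_op_funpow:
  "bounded_clinear_op S \<Longrightarrow> bounded_clinear_op (S ^^ n)"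
proof (induction n)
  case 0
  show ?case
    unfolding bounded_clinear_op_def by (auto intro!: exI [of _ 1])
qed (simp add: bounded_clinear_op_comp)

lemma bounded_clinear_op_continuous_on:
  assumes S: "bounded_clinear_op S"
  shows "continuous_on UNIV S"
proof -
  obtain K where K: "K \<ge> 0" "\<And>x. norm (S x) \<le> norm x * K"
    using bounded_clinear_op_nonneg_bound [OF S] by blast
  have "dist (S x) (S y) \<le> K * dist x y" for x y
    using K(2) [of "x - y"] by (simp add: dist_norm bounded_clinear_op_diff [OF S] mult.commute)
  then show ?thesis
    by (intro lipschitz_on_continuous_on [of K]) (auto intro!: lipschitz_onI simp: K)
qed

lemma funpow_eigenvector:
  assumes "bounded_clinear_op T" "T x = scaleC z x"
  shows "(T ^^ m) x = scaleC (z ^ m) x"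
proof (induction m)
  case 0
  show ?case
    using scaleC_of_real [of 1 x] by simp
next
  case (Suc m)
  then show ?case
    using assms by (simp add: bounded_clinear_op_scaleC scaleC_scaleC mult.commute)
qed

lemma norm_funpow_unimodular_eigenvector:
  assumes "bounded_clinear_op T" "T x = scaleC z x" "norm z = 1"
  shows "norm ((T ^^ m) x) = norm x"
  using assms by (simp add: funpow_eigenvector norm_scaleC norm_power)

section \<open>Partial expansions in an orthonormal sequence\<close>

definition orthonormal :: "(nat \<Rightarrow> 'a::complex_inner_space) \<Rightarrow> bool" where
  "orthonormal e \<longleftrightarrow> (\<forall>i j. cinner (e i) (e j) = (if i = j then 1 else 0))"

definition partial_expansion :: "(nat \<Rightarrow> 'a::complex_inner_space) \<Rightarrow> nat \<Rightarrow> 'a \<Rightarrow> 'a" where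
  "partial_expansion e N x = (\<Sum>k<N. scaleC (cinner (e k) x) (e k))"

lemma orthonormal_norm:
  assumes "orthonormal e"
  shows "norm (e k) = 1"
proof -
  have "(norm (e k))\<^sup>2 = 1"
    using assms by (simp add: orthonormal_def power2_norm_eq_iff_cinner)
  then show ?thesis
    using norm_ge_zero [of "e k"] by (simp add: power2_eq_1_iff)
qed

lemma cinner_partial_expansion_residual:
  assumes "orthonormal e" "j < N"
  shows "cinner (e j) (x - partial_expansion e N x) = 0"
proof -
  have "cinner (e j) (partial_expansion e N x) = (\<Sum>k<N. cinner (e k) x * (if j = k then 1 else 0))"
    using assms(1)
    by (simp add: partial_expansion_def orthonormal_def cinner_sum_right cinner_scaleC_right)
  also have "\<dots> = cinner (e j) x"
    using assms(2) by (simp add: if_distrib cong: if_cong)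
  finally show ?thesis
    by (simp add: cinner_diff_right)
qed

lemma cinner_span_partial_expansion_residual:
  assumes "orthonormal e" "y \<in> cspan (e ` {..<N})"
  shows "cinner y (x - partial_expansion e N x) = 0"
proof -
  obtain F c where F: "F \<subseteq> e ` {..<N}" "y = (\<Sum>v\<in>F. scaleC (c v) v)"
    using assms(2) unfolding cspan_def by blast
  have "cinner v (x - partial_expansion e N x) = 0" if "v \<in> F" for v
    using F(1) that cinner_partial_expansion_residual [OF assms(1)] by blast
  then show ?thesis
    using F(2) by (simp add: cinner_sum_left cinner_scaleC_left)
qed

lemma cinner_partial_expansion_residual_self:
  assumes "orthonormal e"
  shows "cinner (partial_expansion e N x) (x - partial_expansion e N x) = 0"
proof -
  define r where "r = x - partial_expansion e N x"
  have "cinner (e k) r = 0" if "k < N" for k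
    unfolding r_def using assms that by (rule cinner_partial_expansion_residual)
  then show ?thesis
    unfolding r_def [symmetric] by (simp add: partial_expansion_def cinner_sum_left cinner_scaleC_left)
qed

lemma norm_partial_expansion_residual_le:
  assumes "orthonormal e" "y \<in> cspan (e ` {..<N})"
  shows "norm (x - partial_expansion e N x) \<le> norm (x - y)"
proof -
  have "cinner (partial_expansion e N x - y) (x - partial_expansion e N x) = 0"
    using cinner_span_partial_expansion_residual [OF assms, of x]
      cinner_partial_expansion_residual_self [OF assms(1), of N x]
    by (simp add: cinner_diff_left)
  then have "(norm ((x - partial_expansion e N x) + (partial_expansion e N x - y)))\<^sup>2
      = (norm (x - partial_expansion e N x))\<^sup>2 + (norm (partial_expansion e N x - y))\<^sup>2"
    using power2_norm_add_orthogonal cinner_commute_eq_zero by blast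
  then have "(norm (x - y))\<^sup>2
      = (norm (x - partial_expansion e N x))\<^sup>2 + (norm (partial_expansion e N x - y))\<^sup>2"
    by simp
  then have "(norm (x - partial_expansion e N x))\<^sup>2 \<le> (norm (x - y))\<^sup>2"
    by simp
  then show ?thesis
    by (rule power2_le_imp_le) simp
qed

lemma norm_partial_expansion_le:
  assumes "orthonormal e"
  shows "norm (partial_expansion e N x) \<le> norm x"
proof -
  have "cinner (x - partial_expansion e N x) (partial_expansion e N x) = 0"
    by (subst cinner_commute_eq_zero) (rule cinner_partial_expansion_residual_self [OF assms])
  then have "(norm ((x - partial_expansion e N x) + partial_expansion e N x))\<^sup>2
      = (norm (x - partial_expansion e N x))\<^sup>2 + (norm (partial_expansion e N x))\<^sup>2"
    by (rule power2_norm_add_orthogonal)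
  then have "(norm (partial_expansion e N x))\<^sup>2 \<le> (norm x)\<^sup>2"
    by simp
  then show ?thesis
    by (rule power2_le_imp_le) simp
qed

lemma partial_expansion_tendsto:
  assumes "orthonormal e" "closure (cspan (range e)) = UNIV"
  shows "(\<lambda>N. partial_expansion e N x) \<longlonglongrightarrow> x"
proof (rule LIMSEQ_I)
  fix r :: real
  assume "r > 0"
  then obtain y where y: "y \<in> cspan (range e)" "dist y x < r"
    using assms(2) closure_approachable by blast
  then obtain F c where F: "finite F" "F \<subseteq> range e" "y = (\<Sum>v\<in>F. scaleC (c v) v)"
    unfolding cspan_def by blast
  obtain G where G: "finite G" "F = e ` G"
    using finite_subset_image [OF F(1,2)] by blast
  obtain L where L: "G \<subseteq> {..<L}"
    using finite_nat_bounded [OF G(1)] by blast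
  have "norm (partial_expansion e N x - x) < r" if "L \<le> N" for N
  proof -
    have "F \<subseteq> e ` {..<N}"
      using G L that by auto
    then have "y \<in> cspan (e ` {..<N})"
      using F unfolding cspan_def by blast
    then have "norm (x - partial_expansion e N x) \<le> norm (x - y)"
      by (rule norm_partial_expansion_residual_le [OF assms(1)])
    then show ?thesis
      using y(2) by (simp add: dist_norm norm_minus_commute)
  qed
  then show "\<exists>L. \<forall>N\<ge>L. norm (partial_expansion e N x - x) < r"
    by blast
qed

lemma bounded_clinear_op_partial_expansion:
  assumes "orthonormal e"
  shows "bounded_clinear_op (partial_expansion e N)"
  unfolding bounded_clinear_op_def
proof (intro conjI allI exI)
  show "partial_expansion e N (x + y) = partial_expansion e N x + partial_expansion e N y" for x y
    by (simp add: partial_expansion_def cinner_add_right scaleC_add_left sum.distrib)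
  show "partial_expansion e N (scaleC c x) = scaleC c (partial_expansion e N x)" for c x
    by (simp add: partial_expansion_def cinner_scaleC_right scaleC_sum_right scaleC_scaleC)
  show "norm (partial_expansion e N x) \<le> norm x * 1" for x
    using norm_partial_expansion_le [OF assms] by simp
qed

section \<open>Integrating partial expansions\<close>

lemma borel_measurable_bounded_clinear_op_comp:
  assumes "bounded_clinear_op S" "E \<in> borel_measurable M"
  shows "(\<lambda>z. S (E z)) \<in> borel_measurable M"
  using measurable_compose [OF assms(2)
      borel_measurable_continuous_onI [OF bounded_clinear_op_continuous_on [OF assms(1)]]]
  by (simp add: o_def)

lemma integral_norm_image_partial_expansion:
  fixes E :: "'m \<Rightarrow> 'a::complex_inner_space"
  assumes "finite_measure M" "bounded_clinear_op S" "E \<in> borel_measurable M"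
    and bound: "AE z in M. norm (E z) \<le> C"
    and e: "orthonormal e"
    and gram: "\<And>k l. integral\<^sup>L M (\<lambda>z. cinner (e l) (E z) * cnj (cinner (e k) (E z)))
                 = (if k = l then complex_of_real (s k) else 0)"
  shows "integral\<^sup>L M (\<lambda>z. (norm (S (partial_expansion e N (E z))))\<^sup>2)
           = (\<Sum>k<N. s k * (norm (S (e k)))\<^sup>2)"
proof -
  interpret finite_measure M
    by fact
  define c where "c k z = cinner (e k) (E z)" for k z
  have c_measurable: "c k \<in> borel_measurable M" for k
    unfolding c_def
    by (rule measurable_compose [OF assms(3) borel_measurable_continuous_onI [OF continuous_on_cinner_right]])
  have cnj_measurable: "cnj \<in> borel_measurable (borel :: complex measure)"
    by (intro borel_measurable_continuous_onI continuous_intros)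
  have c_bound: "AE z in M. norm (c k z) \<le> C" for k
    using bound
    by eventually_elim (metis c_def norm_cinner_le orthonormal_norm [OF e] mult_1 order_trans)
  have integrable: "integrable M (\<lambda>z. c l z * cnj (c k z))" for k l
  proof (rule integrable_const_bound [where B = "C * C"])
    show "AE z in M. norm (c l z * cnj (c k z)) \<le> C * C"
      using c_bound [of k] c_bound [of l]
      by eventually_elim (simp add: norm_mult mult_mono')
    show "(\<lambda>z. c l z * cnj (c k z)) \<in> borel_measurable M"
      by (intro borel_measurable_times measurable_compose [OF c_measurable cnj_measurable] c_measurable)
  qed
  have expand: "complex_of_real ((norm (S (partial_expansion e N (E z))))\<^sup>2)
      = (\<Sum>k<N. \<Sum>l<N. c l z * cnj (c k z) * cinner (S (e k)) (S (e l)))" for z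
    using norm_sum_scaleC_sq [of "\<lambda>k. c k z" "\<lambda>k. S (e k)" "{..<N}"] assms(2)
    by (simp add: partial_expansion_def c_def bounded_clinear_op_sum bounded_clinear_op_scaleC
        mult.commute)
  have "complex_of_real (integral\<^sup>L M (\<lambda>z. (norm (S (partial_expansion e N (E z))))\<^sup>2))
      = integral\<^sup>L M (\<lambda>z. \<Sum>k<N. \<Sum>l<N. c l z * cnj (c k z) * cinner (S (e k)) (S (e l)))"
    by (simp only: integral_complex_of_real [symmetric] expand)
  also have "\<dots> = (\<Sum>k<N. \<Sum>l<N. integral\<^sup>L M (\<lambda>z. c l z * cnj (c k z)) * cinner (S (e k)) (S (e l)))"
    using integrable by (simp add: integral_sum integrable_sum)
  also have "\<dots> = (\<Sum>k<N. complex_of_real (s k) * cinner (S (e k)) (S (e k)))"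
    by (simp add: gram [folded c_def] if_distrib [of "\<lambda>a. a * _"] sum.delta cong: if_cong)
  also have "\<dots> = complex_of_real (\<Sum>k<N. s k * (norm (S (e k)))\<^sup>2)"
    by (simp add: cinner_norm)
  finally show ?thesis
    by (simp only: of_real_eq_iff)
qed

lemma integral_norm_image_partial_expansion_tendsto:
  fixes E :: "'m \<Rightarrow> 'a::{complex_inner_space, complete_space}"
  assumes "finite_measure M" "bounded_clinear_op S" "E \<in> borel_measurable M"
    and bound: "AE z in M. norm (E z) \<le> C"
    and e: "orthonormal e" "closure (cspan (range e)) = UNIV"
  shows "(\<lambda>N. integral\<^sup>L M (\<lambda>z. (norm (S (partial_expansion e N (E z))))\<^sup>2))
           \<longlonglongrightarrow> integral\<^sup>L M (\<lambda>z. (norm (S (E z)))\<^sup>2)"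
proof -
  interpret finite_measure M
    by fact
  obtain K where K: "K \<ge> 0" "\<And>x. norm (S x) \<le> norm x * K"
    using bounded_clinear_op_nonneg_bound [OF assms(2)] by blast
  have SP: "bounded_clinear_op (S \<circ> partial_expansion e N)" for N
    by (intro bounded_clinear_op_comp bounded_clinear_op_partial_expansion assms(2) e(1))
  have [measurable]: "(\<lambda>z. S (E z)) \<in> borel_measurable M"
    by (rule borel_measurable_bounded_clinear_op_comp [OF assms(2,3)])
  have [measurable]: "(\<lambda>z. S (partial_expansion e N (E z))) \<in> borel_measurable M" for N
    using borel_measurable_bounded_clinear_op_comp [OF SP assms(3)] by (simp add: o_def)
  show ?thesis
  proof (rule integral_dominated_convergence [where w = "\<lambda>_. (C * K)\<^sup>2"])
    show "(\<lambda>z. (norm (S (E z)))\<^sup>2) \<in> borel_measurable M"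
      by measurable
    show "(\<lambda>z. (norm (S (partial_expansion e N (E z))))\<^sup>2) \<in> borel_measurable M" for N
      by measurable
    show "integrable M (\<lambda>_. (C * K)\<^sup>2)"
      by (rule integrable_const)
    show "AE z in M. (\<lambda>N. (norm (S (partial_expansion e N (E z))))\<^sup>2) \<longlonglongrightarrow> (norm (S (E z)))\<^sup>2"
    proof (rule AE_I2)
      fix z
      have "isCont S (E z)"
        using bounded_clinear_op_continuous_on [OF assms(2)] continuous_on_eq_continuous_at by blast
      then show "(\<lambda>N. (norm (S (partial_expansion e N (E z))))\<^sup>2) \<longlonglongrightarrow> (norm (S (E z)))\<^sup>2"
        by (intro tendsto_intros isCont_tendsto_compose [OF _ partial_expansion_tendsto [OF e]])
    qed
    show "AE z in M. norm ((norm (S (partial_expansion e N (E z))))\<^sup>2) \<le> (C * K)\<^sup>2" for N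
      using bound
    proof eventually_elim
      case (elim z)
      have "norm (S (partial_expansion e N (E z))) \<le> norm (partial_expansion e N (E z)) * K"
        by (rule K(2))
      also have "\<dots> \<le> C * K"
        using order_trans [OF norm_partial_expansion_le [OF e(1)] elim] K(1) by (rule mult_right_mono)
      finally show ?case
        by (simp add: power_mono)
    qed
  qed
qed

lemma integral_coefficients_eigenbasis:
  assumes R: "\<forall>x y. cinner (R x) y = integral\<^sup>L M (\<lambda>z. cinner x (E z) * cnj (cinner y (E z)))"
    and e: "orthonormal e" "\<And>k. R (e k) = scaleC (complex_of_real (s k)) (e k)"
  shows "integral\<^sup>L M (\<lambda>z. cinner (e l) (E z) * cnj (cinner (e k) (E z)))
           = (if k = l then complex_of_real (s k) else 0)"
proof -
  have "integral\<^sup>L M (\<lambda>z. cinner (e l) (E z) * cnj (cinner (e k) (E z))) = cinner (R (e l)) (e k)"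
    using R by simp
  also have "\<dots> = complex_of_real (s l) * cinner (e l) (e k)"
    by (simp add: e(2) cinner_scaleC_left)
  also have "\<dots> = (if k = l then complex_of_real (s k) else 0)"
    using e(1) unfolding orthonormal_def by (cases "k = l") simp_all
  finally show ?thesis .
qed

lemma weighted_norm_image_sums:
  fixes E :: "'m \<Rightarrow> 'a::{complex_inner_space, complete_space}"
  assumes "finite_measure M" "bounded_clinear_op S" "E \<in> borel_measurable M"
    and "AE z in M. norm (E z) \<le> C"
    and "orthonormal e" "closure (cspan (range e)) = UNIV"
    and "\<And>k l. integral\<^sup>L M (\<lambda>z. cinner (e l) (E z) * cnj (cinner (e k) (E z)))
                 = (if k = l then complex_of_real (s k) else 0)"
  shows "(\<lambda>k. s k * (norm (S (e k)))\<^sup>2) sums integral\<^sup>L M (\<lambda>z. (norm (S (E z)))\<^sup>2)"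
  using integral_norm_image_partial_expansion_tendsto [OF assms(1-6)]
  unfolding sums_def integral_norm_image_partial_expansion [OF assms(1-5,7)] .

section \<open>The circle\<close>

lemma measurable_cis_uniform_measure: "cis \<in> measurable (uniform_measure lborel {0..2*pi}) borel"
proof -
  have "cis \<in> borel_measurable borel"
    by (intro borel_measurable_continuous_onI continuous_intros)
  then show ?thesis
    by (simp add: measurable_cong_sets [OF sets_uniform_measure refl])
qed

lemma prob_space_circle_measure: "prob_space circle_measure"
  unfolding circle_measure_def
  by (intro prob_space.prob_space_distr prob_space_uniform_measure measurable_cis_uniform_measure) auto

lemma AE_circle_measure_sphere: "AE z in circle_measure. z \<in> sphere 0 1"
  unfolding circle_measure_def
  by (subst AE_distr_iff) (auto simp: measurable_cis_uniform_measure)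

lemma integral_norm_funpow_eigenvector_field:
  assumes T: "bounded_clinear_op T" and E: "E \<in> borel_measurable circle_measure"
    and eigen: "\<forall>z\<in>sphere 0 1. T (E z) = scaleC z (E z)"
  shows "integral\<^sup>L circle_measure (\<lambda>z. (norm ((T ^^ n) (E z)))\<^sup>2)
           = integral\<^sup>L circle_measure (\<lambda>z. (norm (E z))\<^sup>2)"
proof (rule integral_cong_AE)
  have [measurable]: "(\<lambda>z. (T ^^ n) (E z)) \<in> borel_measurable circle_measure"
    by (rule borel_measurable_bounded_clinear_op_comp [OF bounded_clinear_op_funpow [OF T] E])
  show "(\<lambda>z. (norm ((T ^^ n) (E z)))\<^sup>2) \<in> borel_measurable circle_measure"
    by measurable
  show "(\<lambda>z. (norm (E z))\<^sup>2) \<in> borel_measurable circle_measure"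
    using E by measurable
  show "AE z in circle_measure. (norm ((T ^^ n) (E z)))\<^sup>2 = (norm (E z))\<^sup>2"
    using AE_circle_measure_sphere
    by eventually_elim (simp add: eigen T norm_funpow_unimodular_eigenvector)
qed

theorem lemma5p11:
  fixes T :: "'a::{complex_inner_space, complete_space} \<Rightarrow> 'a"
    and E :: "complex \<Rightarrow> 'a"
    and R :: "'a \<Rightarrow> 'a"
    and e :: "nat \<Rightarrow> 'a"
    and \<sigma> :: "nat \<Rightarrow> real"
  assumes T_bounded: "bounded_clinear_op T"
    and E_meas: "E \<in> borel_measurable circle_measure"
    and E_bounded: "\<exists>C. \<forall>z\<in>sphere 0 1. norm (E z) \<le> C"
    and E_eigen: "\<forall>z\<in>sphere 0 1. T (E z) = scaleC z (E z)"
    and E_spanning: "\<forall>A\<in>sets circle_measure. A \<subseteq> sphere 0 1 \<longrightarrow>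
                        measure circle_measure A = 1 \<longrightarrow> closure (cspan (E ` A)) = UNIV"
    and R_def: "\<forall>x y. cinner (R x) y =
                  integral\<^sup>L circle_measure (\<lambda>z. cinner x (E z) * cnj (cinner y (E z)))"
    and e_orthonormal: "\<forall>i j. cinner (e i) (e j) = (if i = j then 1 else 0)"
    and e_complete: "closure (cspan (range e)) = UNIV"
    and e_eigen: "\<forall>k. R (e k) = scaleC (complex_of_real (2 * (\<sigma> k)\<^sup>2)) (e k)"
    and n_pos: "n \<ge> (1::nat)"
  shows "summable (\<lambda>k. (\<sigma> k)\<^sup>2 * (norm ((T ^^ n) (e k)))\<^sup>2) \<and>
         (\<Sum>k. (\<sigma> k)\<^sup>2 * (norm ((T ^^ n) (e k)))\<^sup>2)
           \<le> integral\<^sup>L circle_measure (\<lambda>z. (norm (E z))\<^sup>2) / 2"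
proof -
  obtain C where C: "\<forall>z\<in>sphere 0 1. norm (E z) \<le> C"
    using E_bounded by blast
  have bound: "AE z in circle_measure. norm (E z) \<le> C"
    using C by (intro AE_mp [OF AE_circle_measure_sphere AE_I2]) blast
  have e: "orthonormal e"
    using e_orthonormal unfolding orthonormal_def .
  have "(\<lambda>k. 2 * (\<sigma> k)\<^sup>2 * (norm ((T ^^ n) (e k)))\<^sup>2)
      sums integral\<^sup>L circle_measure (\<lambda>z. (norm ((T ^^ n) (E z)))\<^sup>2)"
    by (rule weighted_norm_image_sums [OF prob_space.finite_measure [OF prob_space_circle_measure]
          bounded_clinear_op_funpow [OF T_bounded] E_meas bound e e_complete
          integral_coefficients_eigenbasis [OF R_def e e_eigen [rule_format]]])
  also have "integral\<^sup>L circle_measure (\<lambda>z. (norm ((T ^^ n) (E z)))\<^sup>2)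
      = integral\<^sup>L circle_measure (\<lambda>z. (norm (E z))\<^sup>2)"
    by (rule integral_norm_funpow_eigenvector_field [OF T_bounded E_meas E_eigen])
  finally have "(\<lambda>k. 2 * (\<sigma> k)\<^sup>2 * (norm ((T ^^ n) (e k)))\<^sup>2 / 2)
      sums (integral\<^sup>L circle_measure (\<lambda>z. (norm (E z))\<^sup>2) / 2)"
    by (rule sums_divide)
  then show ?thesis
    by (simp add: sums_iff)
qed

end
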